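(* Let $\mathcal{N}=(\mathcal{S},\mathcal{C},\mathcal{R})$ be an open chemical reaction network. Then $\ker(J_c(f_\kappa))\cap\Gamma\neq\{0\}$ for all $\kappa\in\mathbb{R}_+^{\mathcal{R}}$ and all $c\in\mathbb{R}^n_+$ if and only if for every set of $n$ reactions $y^1\to y'^1,\dots,y^n\to y'^n$ of $\mathcal{N}$ such that the vectors $y^1-y'^1,\dots,y^n-y'^n$ are linearly independent, the complexes $y^1,\dots,y^n$ are linearly dependent.
   Context: A chemical reaction network $\mathcal{N}=(\mathcal{S},\mathcal{C},\mathcal{R})$ consists of a finite set of species $\mathcal{S}=\{S_1,\dots,S_n\}$, a finite set of complexes $\mathcal{C}\subset\mathbb{Z}_{\ge 0}^n$ (species $S_i$ identified with the $i$-th standard basis vector), and a finite set of reactions $\mathcal{R}\subset\mathcal{C}\times\mathcal{C}$, written $y\to y'$, with $y\ne y'$. A rate vector is $\kappa=(k_{y\to y'})\in\mathbb{R}_+^{\mathcal{R}}$ ($\mathbb{R}_+$ the positive reals); the mass-action species formation rate function is $f_\kappa(c)=\sum_{y\to y'\in\mathcal{R}}k_{y\to y'}c^y(y'-y)$, $c^y=\prod_i c_i^{y_i}$, with Jacobian $J_c(f_\kappa)$ at $c$. The stoichiometric subspace is $\Gamma=\mathrm{span}\{y'-y:y\to y'\in\mathcal{R}\}$; the network is open if $\Gamma=\mathbb{R}^n$. *)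

theory Defs
  imports "HOL-Analysis.Analysis"
begin

text \<open>Species are indexed by a finite type 'n (so n = CARD('n)); complexes are
vectors in Z_{>=0}^n, represented as nat ^ 'n; a reaction y -> y' is the pair (y, y').\<close>

type_synonym 'n complex = "nat ^ 'n"
type_synonym 'n reaction = "'n complex \<times> 'n complex"

definition rvec :: "'n complex \<Rightarrow> real ^ 'n" where
  "rvec y = (\<chi> i. real (y $ i))"

definition crn :: "'n::finite complex set \<Rightarrow> 'n reaction set \<Rightarrow> bool" where
  "crn C R \<longleftrightarrow> finite C \<and> R \<subseteq> C \<times> C \<and> (\<forall>(y, y') \<in> R. y \<noteq> y')"

definition monom :: "real ^ 'n \<Rightarrow> 'n::finite complex \<Rightarrow> real" where
  "monom c y = (\<Prod>i\<in>UNIV. (c $ i) ^ (y $ i))"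

definition rate_fun :: "'n::finite reaction set \<Rightarrow> ('n reaction \<Rightarrow> real) \<Rightarrow> real ^ 'n \<Rightarrow> real ^ 'n" where
  "rate_fun R \<kappa> c = (\<Sum>(y, y') \<in> R. (\<kappa> (y, y') * monom c y) *\<^sub>R (rvec y' - rvec y))"

definition jacobian :: "(real ^ 'n \<Rightarrow> real ^ 'n) \<Rightarrow> real ^ 'n \<Rightarrow> real ^ 'n ^ 'n::finite" where
  "jacobian f c = matrix (frechet_derivative f (at c))"

definition stoich_space :: "'n::finite reaction set \<Rightarrow> (real ^ 'n) set" where
  "stoich_space R = span {rvec y' - rvec y | y y'. (y, y') \<in> R}"

definition open_crn :: "'n::finite reaction set \<Rightarrow> bool" where
  "open_crn R \<longleftrightarrow> stoich_space R = UNIV"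

definition lin_indep_family :: "('n \<Rightarrow> real ^ 'm) \<Rightarrow> bool" where
  "lin_indep_family v \<longleftrightarrow> inj v \<and> independent (range v)"

end

theory Submission
  imports Defs
begin

text \<open>At a positive state c the Jacobian factors as J = - M(b) diag(1/c), where
M(b) = (\<Sum>r. b r (y r - y' r) (y r)^T) and b r = \<kappa> r c^(y r); since \<Gamma> is the whole space, the
left-hand condition says that det M(b) = 0 for every positive weight vector b. A symmetrised
Cauchy-Binet expansion writes n! det M(b) as the sum, over all n-tuples f of reactions, of
(\<Prod>i. b (f i)) det(y f - y' f) det(y f), which gives one implication. Conversely, by
continuity det M(b) also vanishes when b is the indicator of the reactions of a tuple \<rho>,
and there M(b) = U^T W, where U and W have the rows y - y' and y of the reactions of \<rho>;
hence det U det W = 0.\<close>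

lemma det_neq_0_iff_lin_indep_family:
  fixes x :: "'n::finite \<Rightarrow> real ^ 'n"
  shows "det (\<chi> i. x i) \<noteq> 0 \<longleftrightarrow> lin_indep_family x"
proof
  have rows: "rows (\<chi> i. x i) = range x" by (auto simp: rows_def row_def)
  assume det: "det (\<chi> i. x i) \<noteq> 0"
  have "inj x"
  proof (rule injI, rule ccontr)
    fix i j assume "x i = x j" "i \<noteq> j"
    then have "det (\<chi> i. x i) = 0" by (intro det_identical_rows[of i j]) (auto simp: row_def)
    with det show False by simp
  qed
  moreover have "independent (range x)"
    using det_dependent_rows[of "\<chi> i. x i"] det rows by (auto simp: dependent_vec_eq)
  ultimately show "lin_indep_family x" by (simp add: lin_indep_family_def)
next
  have rows: "rows (\<chi> i. x i) = range x" by (auto simp: rows_def row_def)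
  assume "lin_indep_family x"
  then have "rank (\<chi> i. x i) = CARD('n)"
    by (simp add: lin_indep_family_def row_rank_def rows dim_eq_card_independent card_image)
  then show "det (\<chi> i. x i) \<noteq> 0" by (simp add: det_eq_0_rank)
qed

lemma det_eq_0_iff_nontrivial_kernel:
  fixes A :: "real ^ 'n::finite ^ 'n"
  shows "det A = 0 \<longleftrightarrow> (\<exists>x. x \<noteq> 0 \<and> A *v x = 0)"
  using invertible_det_nz[of A] invertible_left_inverse[of A] matrix_left_invertible_ker[of A] by auto

definition weighted_outer_sum ::
    "'a set \<Rightarrow> ('a \<Rightarrow> real) \<Rightarrow> ('a \<Rightarrow> real ^ 'n) \<Rightarrow> ('a \<Rightarrow> real ^ 'm) \<Rightarrow> real ^ 'm ^ 'n" where
  "weighted_outer_sum R b u w = (\<chi> i j. \<Sum>r\<in>R. b r * u r $ i * w r $ j)"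

lemma weighted_outer_sum_mult_vec:
  "weighted_outer_sum R b u w *v z = (\<Sum>r\<in>R. (b r * (w r \<bullet> z)) *\<^sub>R u r)"
  by (simp add: vec_eq_iff weighted_outer_sum_def matrix_vector_mult_def inner_vec_def
      sum_component sum_distrib_left sum_distrib_right mult_ac sum.swap[of _ R])

lemma det_weighted_outer_sum_expand:
  fixes u w :: "'a \<Rightarrow> real ^ 'n::finite"
  assumes "finite R"
  shows "det (weighted_outer_sum R b u w) =
    (\<Sum>f | \<forall>i. f i \<in> R. (\<Prod>i\<in>UNIV. b (f i) * u (f i) $ i) * det (\<chi> i. w (f i)))"
proof -
  have "(\<Prod>i\<in>UNIV. \<Sum>r\<in>R. b r * u r $ i * w r $ p i) =
      (\<Sum>f | \<forall>i. f i \<in> R. (\<Prod>i\<in>UNIV. b (f i) * u (f i) $ i) * (\<Prod>i\<in>UNIV. w (f i) $ p i))" for p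
    using assms by (simp add: prod_sum_PiE PiE_UNIV_domain Pi_def prod.distrib)
  then show ?thesis
    by (simp add: det_def weighted_outer_sum_def sum_distrib_left mult.left_commute
        sum.swap[of _ "{p. p permutes UNIV}"])
qed

lemma sum_tuples_reindex_permutes:
  assumes "p permutes (UNIV :: 'n::finite set)"
  shows "(\<Sum>f | \<forall>i::'n. f i \<in> R. g f) = (\<Sum>f | \<forall>i. f i \<in> R. g (f \<circ> p))"
proof -
  have "bij_betw (\<lambda>f. f \<circ> p) {f. \<forall>i. f i \<in> R} {f. \<forall>i. f i \<in> R}"
  proof (rule bij_betwI[where g = "\<lambda>f. f \<circ> inv p"])
    show "x \<circ> p \<circ> inv p = x" "x \<circ> inv p \<circ> p = x" for x :: "'n \<Rightarrow> _"
      by (simp_all add: fun_eq_iff permutes_inverses[OF assms])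
  qed auto
  from sum.reindex_bij_betw[OF this, of g] show ?thesis by simp
qed

lemma det_eq_sum_permutes_rows:
  fixes x :: "'n::finite \<Rightarrow> real ^ 'n"
  shows "det (\<chi> i. x i) = (\<Sum>p | p permutes UNIV. of_int (sign p) * (\<Prod>i\<in>UNIV. x (p i) $ i))"
  by (subst det_transpose[symmetric]) (simp add: det_def transpose_def)

lemma fact_mult_det_weighted_outer_sum:
  fixes u w :: "'a \<Rightarrow> real ^ 'n::finite"
  assumes "finite R"
  shows "fact CARD('n) * det (weighted_outer_sum R b u w) =
    (\<Sum>f | \<forall>i. f i \<in> R. (\<Prod>i\<in>UNIV. b (f i)) * det (\<chi> i. u (f i)) * det (\<chi> i. w (f i)))"
proof -
  let ?F = "{f. \<forall>i::'n. f i \<in> R}"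
  let ?P = "{p. p permutes (UNIV :: 'n set)}"
  define T where "T f = (\<Prod>i\<in>UNIV. b (f i) * u (f i) $ i) * det (\<chi> i. w (f i))" for f
  have T_perm: "T (f \<circ> p) = (\<Prod>i\<in>UNIV. b (f i)) * det (\<chi> i. w (f i)) *
      (of_int (sign p) * (\<Prod>i\<in>UNIV. u (f (p i)) $ i))" if "p \<in> ?P" for f p
  proof -
    have p: "p permutes UNIV" using that by simp
    have "(\<Prod>i\<in>UNIV. b (f (p i))) = (\<Prod>i\<in>UNIV. b (f i))"
      using prod.permute[OF p, of "\<lambda>i. b (f i)"] by (simp add: o_def)
    moreover have "det (\<chi> i. w (f (p i))) = of_int (sign p) * det (\<chi> i. w (f i))"
      using det_permute_rows[OF p, of "\<chi> i. w (f i)"] by simp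
    ultimately show ?thesis by (simp add: T_def prod.distrib mult_ac)
  qed
  \<comment> \<open>Averaging the row expansion over the reorderings f \<circ> p of each tuple turns the
      product of the diagonal entries of u into the determinant of the rows u (f i).\<close>
  have "fact CARD('n) * det (weighted_outer_sum R b u w) = (\<Sum>p\<in>?P. \<Sum>f\<in>?F. T f)"
    by (simp add: card_permutations det_weighted_outer_sum_expand[OF assms] T_def)
  also have "\<dots> = (\<Sum>p\<in>?P. \<Sum>f\<in>?F. T (f \<circ> p))"
    by (intro sum.cong refl sum_tuples_reindex_permutes) simp
  also have "\<dots> = (\<Sum>f\<in>?F. \<Sum>p\<in>?P. T (f \<circ> p))"
    by (rule sum.swap)
  also have "\<dots> = (\<Sum>f\<in>?F. (\<Prod>i\<in>UNIV. b (f i)) * det (\<chi> i. u (f i)) * det (\<chi> i. w (f i)))"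
    by (intro sum.cong refl)
      (simp add: T_perm sum_distrib_left det_eq_sum_permutes_rows[of "\<lambda>i. u (f i)" for f] mult_ac)
  finally show ?thesis .
qed

lemma det_weighted_outer_sum_eq_0:
  fixes u w :: "'a \<Rightarrow> real ^ 'n::finite"
  assumes "finite R"
    and "\<And>f. \<forall>i. f i \<in> R \<Longrightarrow> det (\<chi> i. u (f i)) = 0 \<or> det (\<chi> i. w (f i)) = 0"
  shows "det (weighted_outer_sum R b u w) = 0"
proof -
  have "fact CARD('n) * det (weighted_outer_sum R b u w) = 0"
    unfolding fact_mult_det_weighted_outer_sum[OF assms(1)] by (rule sum.neutral) (use assms(2) in auto)
  then show ?thesis by simp
qed

lemma weighted_outer_sum_indicator_range:
  fixes u w :: "'a \<Rightarrow> real ^ 'n::finite"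
  assumes "finite R" "inj \<rho>" "range \<rho> \<subseteq> R"
  shows "weighted_outer_sum R (indicator (range \<rho>)) u w = transpose (\<chi> i. u (\<rho> i)) ** (\<chi> i. w (\<rho> i))"
proof -
  have "{r \<in> R. r \<in> range \<rho>} = range \<rho>"
    using assms(3) by blast
  then have "(\<Sum>r\<in>R. indicator (range \<rho>) r * u r $ j * w r $ k) = (\<Sum>i\<in>UNIV. u (\<rho> i) $ j * w (\<rho> i) $ k)"
    for j k
    using assms(1,2) by (simp add: mult.assoc sum.reindex)
  then show ?thesis
    by (simp add: vec_eq_iff weighted_outer_sum_def matrix_matrix_mult_def transpose_def)
qed

lemma det_weighted_outer_sum_nonneg_weights:
  fixes u w :: "'a \<Rightarrow> real ^ 'n::finite"
  assumes "\<And>b. \<forall>r\<in>R. 0 < b r \<Longrightarrow> det (weighted_outer_sum R b u w) = 0"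
    and "\<forall>r\<in>R. 0 \<le> b r"
  shows "det (weighted_outer_sum R b u w) = 0"
proof -
  define g where "g e = det (weighted_outer_sum R (\<lambda>r. b r + e) u w)" for e :: real
  have "isCont g 0"
    unfolding g_def det_def weighted_outer_sum_def by (simp, intro continuous_intros)
  then have "(g \<longlongrightarrow> g 0) (at_right 0)"
    by (simp add: isCont_def filterlim_at_split)
  moreover have "g e = 0" if "0 < e" for e
    unfolding g_def using assms(2) that by (intro assms(1)) (auto intro: add_nonneg_pos)
  then have "\<forall>\<^sub>F e in at_right 0. g e = 0"
    by (simp add: eventually_mono[OF eventually_at_right_less])
  then have "(g \<longlongrightarrow> 0) (at_right 0)"
    by (rule tendsto_eventually)
  ultimately have "g 0 = 0"
    using tendsto_unique trivial_limit_at_right_real by blast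
  then show ?thesis by (simp add: g_def)
qed

lemma det_weighted_outer_sum_vanishes_iff:
  fixes u w :: "'a \<Rightarrow> real ^ 'n::finite"
  assumes "finite R"
  shows "(\<forall>b. (\<forall>r\<in>R. 0 < b r) \<longrightarrow> det (weighted_outer_sum R b u w) = 0) \<longleftrightarrow>
    (\<forall>\<rho>. (\<forall>i. \<rho> i \<in> R) \<longrightarrow> det (\<chi> i. u (\<rho> i)) = 0 \<or> det (\<chi> i. w (\<rho> i)) = 0)"
proof (intro iffI allI impI)
  fix \<rho> :: "'n \<Rightarrow> 'a"
  assume vanish: "\<forall>b. (\<forall>r\<in>R. 0 < b r) \<longrightarrow> det (weighted_outer_sum R b u w) = 0"
    and "\<forall>i. \<rho> i \<in> R"
  then have range: "range \<rho> \<subseteq> R" by auto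
  show "det (\<chi> i. u (\<rho> i)) = 0 \<or> det (\<chi> i. w (\<rho> i)) = 0"
  proof (rule disjCI)
    assume "det (\<chi> i. w (\<rho> i)) \<noteq> 0"
    then have "inj \<rho>"
      using det_neq_0_iff_lin_indep_family[of "\<lambda>i. w (\<rho> i)"]
      by (auto simp: lin_indep_family_def inj_def)
    have "det (\<chi> i. u (\<rho> i)) * det (\<chi> i. w (\<rho> i)) = det (weighted_outer_sum R (indicator (range \<rho>)) u w)"
      by (simp only: weighted_outer_sum_indicator_range[OF assms \<open>inj \<rho>\<close> range] det_mul det_transpose)
    also have "\<dots> = 0"
      by (rule det_weighted_outer_sum_nonneg_weights) (use vanish in blast, simp)
    finally show "det (\<chi> i. u (\<rho> i)) = 0"
      using \<open>det (\<chi> i. w (\<rho> i)) \<noteq> 0\<close> by simp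
  qed
next
  show "det (weighted_outer_sum R b u w) = 0"
    if "\<forall>\<rho>. (\<forall>i. \<rho> i \<in> R) \<longrightarrow> det (\<chi> i. u (\<rho> i)) = 0 \<or> det (\<chi> i. w (\<rho> i)) = 0" for b
    by (rule det_weighted_outer_sum_eq_0[OF assms]) (use that in blast)
qed

lemma monom_pos: "\<forall>i. 0 < c $ i \<Longrightarrow> 0 < monom c y"
  by (simp add: monom_def prod_pos)

lemma monom_ones [simp]: "monom (\<chi> i. 1) y = 1"
  by (simp add: monom_def)

lemma has_derivative_monom:
  fixes c :: "real ^ 'n::finite"
  assumes pos: "\<forall>i. 0 < c $ i"
  shows "((\<lambda>c. monom c y) has_derivative (\<lambda>v. monom c y * (rvec y \<bullet> (\<chi> j. v $ j / c $ j)))) (at c)"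
proof -
  have "((\<lambda>c. monom c y) has_derivative (\<lambda>v. \<Sum>i\<in>UNIV.
      real (y $ i) * c $ i ^ (y $ i - 1) * v $ i * (\<Prod>j\<in>UNIV - {i}. c $ j ^ y $ j))) (at c)"
    unfolding monom_def
    by (rule has_derivative_prod, rule derivative_eq_intros)
      (auto intro!: derivative_eq_intros bounded_linear_imp_has_derivative)
  moreover have "real (y $ i) * c $ i ^ (y $ i - 1) * v $ i * (\<Prod>j\<in>UNIV - {i}. c $ j ^ y $ j) =
      monom c y * (real (y $ i) * (v $ i / c $ i))" for i v
  proof -
    have "real (y $ i) * c $ i ^ (y $ i - 1) = real (y $ i) * c $ i ^ y $ i / c $ i"
      using pos by (cases "y $ i") (auto simp: less_imp_neq[symmetric])
    moreover have "monom c y = c $ i ^ y $ i * (\<Prod>j\<in>UNIV - {i}. c $ j ^ y $ j)"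
      by (simp add: monom_def prod.remove)
    ultimately show ?thesis by simp
  qed
  ultimately show ?thesis
    by (simp add: inner_vec_def rvec_def sum_distrib_left)
qed

lemma has_derivative_rate_fun:
  fixes c :: "real ^ 'n::finite"
  assumes "\<forall>i. 0 < c $ i"
  shows "(rate_fun R \<kappa> has_derivative (\<lambda>v. - (weighted_outer_sum R (\<lambda>r. \<kappa> r * monom c (fst r))
      (\<lambda>r. rvec (fst r) - rvec (snd r)) (\<lambda>r. rvec (fst r)) *v (\<chi> j. v $ j / c $ j)))) (at c)"
proof -
  have "rate_fun R \<kappa> = (\<lambda>c. \<Sum>r\<in>R. (\<kappa> r * monom c (fst r)) *\<^sub>R (rvec (snd r) - rvec (fst r)))"
    by (simp add: rate_fun_def split_def fun_eq_iff)
  moreover have "(\<lambda>v. \<Sum>r\<in>R. (\<kappa> r * (monom c (fst r) * (rvec (fst r) \<bullet> (\<chi> j. v $ j / c $ j))))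
      *\<^sub>R (rvec (snd r) - rvec (fst r))) = (\<lambda>v. - (weighted_outer_sum R (\<lambda>r. \<kappa> r * monom c (fst r))
      (\<lambda>r. rvec (fst r) - rvec (snd r)) (\<lambda>r. rvec (fst r)) *v (\<chi> j. v $ j / c $ j)))"
    by (simp add: weighted_outer_sum_mult_vec fun_eq_iff mult.assoc flip: sum_negf scaleR_minus_right)
  ultimately show ?thesis
    using has_derivative_monom[OF assms]
    by (auto intro!: derivative_eq_intros)
qed

lemma jacobian_mult_vec:
  assumes "(f has_derivative f') (at c)"
  shows "jacobian f c *v v = f' v"
proof -
  have "linear f'" using assms by (rule has_derivative_linear)
  then show ?thesis
    using frechet_derivative_at[OF assms] matrix_works[of f']
    by (simp add: jacobian_def linear_matrix_vector_mul_eq)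
qed

lemma jacobian_rate_fun_singular_iff:
  fixes c :: "real ^ 'n::finite"
  assumes pos: "\<forall>i. 0 < c $ i"
  shows "(\<exists>v. v \<noteq> 0 \<and> jacobian (rate_fun R \<kappa>) c *v v = 0) \<longleftrightarrow>
    det (weighted_outer_sum R (\<lambda>r. \<kappa> r * monom c (fst r))
      (\<lambda>r. rvec (fst r) - rvec (snd r)) (\<lambda>r. rvec (fst r))) = 0"
    (is "_ \<longleftrightarrow> det ?M = 0")
proof -
  define scale :: "real ^ 'n \<Rightarrow> real ^ 'n" where "scale v = (\<chi> j. v $ j / c $ j)" for v
  have jac: "jacobian (rate_fun R \<kappa>) c *v v = - (?M *v scale v)" for v
    unfolding scale_def by (rule jacobian_mult_vec[OF has_derivative_rate_fun[OF pos]])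
  have c_nonzero: "c $ j \<noteq> 0" for j
    using pos[rule_format, of j] by simp
  have scale_inverse: "scale (\<chi> j. z $ j * c $ j) = z" for z
    by (simp add: scale_def vec_eq_iff c_nonzero)
  have scale_eq_0: "scale v = 0 \<longleftrightarrow> v = 0" for v
    by (simp add: scale_def vec_eq_iff c_nonzero)
  have "(\<exists>v. v \<noteq> 0 \<and> ?M *v scale v = 0) \<longleftrightarrow> (\<exists>z. z \<noteq> 0 \<and> ?M *v z = 0)"
  proof
    assume "\<exists>v. v \<noteq> 0 \<and> ?M *v scale v = 0"
    then obtain v where "v \<noteq> 0" "?M *v scale v = 0" by blast
    then show "\<exists>z. z \<noteq> 0 \<and> ?M *v z = 0"
      using scale_eq_0[of v] by blast
  next
    assume "\<exists>z. z \<noteq> 0 \<and> ?M *v z = 0"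
    then obtain z where z: "z \<noteq> 0" "?M *v z = 0" by blast
    show "\<exists>v. v \<noteq> 0 \<and> ?M *v scale v = 0"
    proof (intro exI conjI)
      show "?M *v scale (\<chi> j. z $ j * c $ j) = 0"
        unfolding scale_inverse by (rule z(2))
      show "(\<chi> j. z $ j * c $ j) \<noteq> 0"
        using z(1) scale_eq_0[of "\<chi> j. z $ j * c $ j"] unfolding scale_inverse by blast
    qed
  qed
  then show ?thesis
    by (simp add: jac det_eq_0_iff_nontrivial_kernel)
qed

lemma open_crn_jacobian_singular_iff:
  fixes R :: "'n::finite reaction set"
  assumes "open_crn R"
  shows "(\<forall>\<kappa> c. (\<forall>r\<in>R. \<kappa> r > 0) \<longrightarrow> (\<forall>i. c $ i > 0) \<longrightarrow>
      (\<exists>v. v \<in> stoich_space R \<and> v \<noteq> 0 \<and> jacobian (rate_fun R \<kappa>) c *v v = 0)) \<longleftrightarrow>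
    (\<forall>b. (\<forall>r\<in>R. 0 < b r) \<longrightarrow>
      det (weighted_outer_sum R b (\<lambda>r. rvec (fst r) - rvec (snd r)) (\<lambda>r. rvec (fst r))) = 0)"
    (is "?singular \<longleftrightarrow> (\<forall>b. _ \<longrightarrow> det (?M b) = 0)")
proof (intro iffI allI impI)
  fix b :: "'n reaction \<Rightarrow> real"
  assume ?singular and "\<forall>r\<in>R. 0 < b r"
  then have "\<exists>v. v \<noteq> 0 \<and> jacobian (rate_fun R b) (\<chi> i. 1) *v v = 0"
    by (auto dest!: spec[of _ b] spec[of _ "\<chi> i. 1"])
  then show "det (?M b) = 0"
    using jacobian_rate_fun_singular_iff[of "\<chi> i. 1" R b] by simp
next
  fix \<kappa> :: "'n reaction \<Rightarrow> real" and c :: "real ^ 'n"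
  assume "\<forall>b. (\<forall>r\<in>R. 0 < b r) \<longrightarrow> det (?M b) = 0" and "\<forall>r\<in>R. 0 < \<kappa> r" and pos: "\<forall>i. 0 < c $ i"
  then have "det (?M (\<lambda>r. \<kappa> r * monom c (fst r))) = 0"
    by (simp add: monom_pos)
  then show "\<exists>v. v \<in> stoich_space R \<and> v \<noteq> 0 \<and> jacobian (rate_fun R \<kappa>) c *v v = 0"
    using jacobian_rate_fun_singular_iff[OF pos] assms by (simp add: open_crn_def)
qed

theorem corollary8p2:
  fixes C :: "'n::finite complex set" and R :: "'n reaction set"
  assumes "crn C R" and "open_crn R"
  shows "(\<forall>\<kappa> c. (\<forall>r\<in>R. \<kappa> r > 0) \<longrightarrow> (\<forall>i. c $ i > 0) \<longrightarrow>
            (\<exists>v. v \<in> stoich_space R \<and> v \<noteq> 0 \<and> jacobian (rate_fun R \<kappa>) c *v v = 0))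
     \<longleftrightarrow>
         (\<forall>r :: 'n \<Rightarrow> 'n reaction. (\<forall>i. r i \<in> R) \<longrightarrow>
            lin_indep_family (\<lambda>i. rvec (fst (r i)) - rvec (snd (r i))) \<longrightarrow>
            \<not> lin_indep_family (\<lambda>i. rvec (fst (r i))))"
    (is "?singular \<longleftrightarrow> ?dependent")
proof -
  have "finite R"
    using assms(1) unfolding crn_def by (meson finite_SigmaI finite_subset)
  have "?singular \<longleftrightarrow> (\<forall>\<rho>. (\<forall>i. \<rho> i \<in> R) \<longrightarrow>
      det (\<chi> i. rvec (fst (\<rho> i)) - rvec (snd (\<rho> i))) = 0 \<or> det (\<chi> i. rvec (fst (\<rho> i))) = 0)"
    unfolding open_crn_jacobian_singular_iff[OF assms(2)]
    by (rule det_weighted_outer_sum_vanishes_iff[OF \<open>finite R\<close>])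
  also have "\<dots> \<longleftrightarrow> ?dependent"
    by (simp add: det_neq_0_iff_lin_indep_family[symmetric] disj_commute imp_conv_disj)
  finally show ?thesis .
qed

end
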